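(* Let $G$ be a graph and $(x,y)\in E(G)$ with $d_x=d_y=d$. Let $\Delta_G(x,y)=N_G(x)\cap N_G(y)$, $Q_G(x)=N_G(x)\setminus\Delta_G(x,y)$ and $Q_G(y)=N_G(y)\setminus\Delta_G(x,y)$. Then $\kappa(x,y)=\frac{|\Delta_G(x,y)|}{d}$ if and only if there is a perfect matching between $Q_G(x)$ and $Q_G(y)$, i.e. a bijection $\sigma:Q_G(x)\to Q_G(y)$ with $(a,\sigma(a))\in E(G)$ for all $a\in Q_G(x)$.
   Context: Graphs are locally finite and unweighted. $d_G$ is the shortest-path metric, $N_G(v)$ the neighbour set and $d_v$ the degree of $v$; $m_v$ is the uniform probability measure on $N_G(v)$, and for an edge $(x,y)$, $\kappa(x,y)=1-W_1(m_x,m_y)$, where $W_1$ is the Wasserstein-1 (transportation) distance with respect to $d_G$. Note that $y\in Q_G(x)$ and $x\in Q_G(y)$. *)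

theory Defs
  imports Complex_Main "HOL-Library.Extended_Nat"
begin

text \<open>A graph on vertex type 'a is given by an edge relation E, assumed symmetric,
irreflexive and locally finite in the theorem.\<close>

definition nbrs :: "('a \<Rightarrow> 'a \<Rightarrow> bool) \<Rightarrow> 'a \<Rightarrow> 'a set" where
  "nbrs E v = {u. E v u}"

definition deg :: "('a \<Rightarrow> 'a \<Rightarrow> bool) \<Rightarrow> 'a \<Rightarrow> nat" where
  "deg E v = card (nbrs E v)"

definition gdist :: "('a \<Rightarrow> 'a \<Rightarrow> bool) \<Rightarrow> 'a \<Rightarrow> 'a \<Rightarrow> enat" where
  "gdist E u v = (if \<exists>n p. p (0::nat) = u \<and> p n = v \<and> (\<forall>i<n. E (p i) (p (Suc i)))
     then enat (LEAST n. \<exists>p. p (0::nat) = u \<and> p n = v \<and> (\<forall>i<n. E (p i) (p (Suc i))))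
     else \<infinity>)"

definition unif_nbr :: "('a \<Rightarrow> 'a \<Rightarrow> bool) \<Rightarrow> 'a \<Rightarrow> 'a \<Rightarrow> real" where
  "unif_nbr E v u = (if u \<in> nbrs E v then 1 / real (deg E v) else 0)"

definition couplings :: "'a set \<Rightarrow> ('a \<Rightarrow> real) \<Rightarrow> 'a set \<Rightarrow> ('a \<Rightarrow> real) \<Rightarrow> ('a \<Rightarrow> 'a \<Rightarrow> real) set" where
  "couplings A mu B nu = {pi. (\<forall>u v. 0 \<le> pi u v) \<and>
      (\<forall>u v. pi u v \<noteq> 0 \<longrightarrow> u \<in> A \<and> v \<in> B) \<and>
      (\<forall>u. (\<Sum>v\<in>B. pi u v) = mu u) \<and>
      (\<forall>v. (\<Sum>u\<in>A. pi u v) = nu v)}"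

text \<open>Pairs in the support of a plan at infinite distance are excluded (cost would be infinite);
for the neighbourhoods of an edge all distances are finite.\<close>
definition W1 :: "('a \<Rightarrow> 'a \<Rightarrow> bool) \<Rightarrow> 'a set \<Rightarrow> ('a \<Rightarrow> real) \<Rightarrow> 'a set \<Rightarrow> ('a \<Rightarrow> real) \<Rightarrow> real" where
  "W1 E A mu B nu = Inf {(\<Sum>(u,v)\<in>A \<times> B. pi u v * real (the_enat (gdist E u v))) | pi.
      pi \<in> couplings A mu B nu \<and> (\<forall>u v. pi u v \<noteq> 0 \<longrightarrow> gdist E u v \<noteq> \<infinity>)}"

definition kappa :: "('a \<Rightarrow> 'a \<Rightarrow> bool) \<Rightarrow> 'a \<Rightarrow> 'a \<Rightarrow> real" where
  "kappa E x y = 1 - W1 E (nbrs E x) (unif_nbr E x) (nbrs E y) (unif_nbr E y)"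

definition Delta :: "('a \<Rightarrow> 'a \<Rightarrow> bool) \<Rightarrow> 'a \<Rightarrow> 'a \<Rightarrow> 'a set" where
  "Delta E x y = nbrs E x \<inter> nbrs E y"

definition Qset :: "('a \<Rightarrow> 'a \<Rightarrow> bool) \<Rightarrow> 'a \<Rightarrow> 'a \<Rightarrow> 'a set" where
  "Qset E x y = nbrs E x - Delta E x y"

end

theory Submission
  imports Defs
begin

text \<open>Every coupling of the uniform measures on the neighbourhoods moves the mass \<open>1/d\<close> of each
vertex of \<open>Q(x)\<close> a distance at least 1, so \<open>W\<^sub>1 \<ge> |Q(x)|/d\<close>, i.e. \<open>\<kappa>(x,y) \<le> |\<Delta>|/d\<close>; a perfect
matching \<open>\<sigma>\<close> gives the plan that fixes \<open>\<Delta>\<close> and sends each \<open>a\<close> to \<open>\<sigma>(a)\<close>, which attains the bound.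
Conversely, without a perfect matching Hall's theorem yields \<open>S \<subseteq> Q(x)\<close> whose neighbourhood \<open>T\<close>
in \<open>Q(y)\<close> is smaller than \<open>S\<close>. Mass leaving \<open>S\<close> either travels distance 2 into \<open>Q(y) - T\<close> or
lands in \<open>\<Delta> \<union> T\<close>; the mass \<open>Q(x)\<close> sends into \<open>\<Delta>\<close> must be passed on from \<open>\<Delta>\<close> into \<open>Q(y)\<close> at
cost 1, and at most \<open>|T|/d\<close> can land in \<open>T\<close>. So every plan costs at least
\<open>(|Q(x)| + |S| - |T|)/d > |Q(x)|/d\<close>.\<close>

definition walk :: "('a \<Rightarrow> 'a \<Rightarrow> bool) \<Rightarrow> nat \<Rightarrow> 'a \<Rightarrow> 'a \<Rightarrow> bool" where
  "walk E n u v \<longleftrightarrow> (\<exists>p. p 0 = u \<and> p n = v \<and> (\<forall>i<n. E (p i) (p (Suc i))))"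

lemma gdist_eq_Least_walk:
  "gdist E u v = (if \<exists>n. walk E n u v then enat (LEAST n. walk E n u v) else \<infinity>)"
  unfolding gdist_def walk_def by simp

lemma walk_0_iff [simp]: "walk E 0 u v \<longleftrightarrow> u = v"
  unfolding walk_def by auto

text \<open>Stated for \<open>Suc 0\<close> rather than \<open>1\<close>, since the simplifier rewrites \<open>1 :: nat\<close> to \<open>Suc 0\<close>.\<close>

lemma walk_Suc_0_iff [simp]: "walk E (Suc 0) u v \<longleftrightarrow> E u v"
proof
  assume "E u v"
  then show "walk E (Suc 0) u v"
    unfolding walk_def by (intro exI[of _ "\<lambda>i. if i = 0 then u else v"]) simp
qed (auto simp: walk_def)

lemma walk_snoc:
  assumes "walk E n u w" "E w v"
  shows "walk E (Suc n) u v"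
proof -
  obtain p where "p 0 = u" "p n = w" "\<forall>i<n. E (p i) (p (Suc i))"
    using assms(1) unfolding walk_def by blast
  then show ?thesis
    using assms(2) unfolding walk_def
    by (intro exI[of _ "p(Suc n := v)"]) (auto simp: less_Suc_eq)
qed

lemma gdist_finite_if_walk: "walk E n u v \<Longrightarrow> gdist E u v \<noteq> \<infinity>"
  by (auto simp: gdist_eq_Least_walk)

lemma walk_the_gdist: "gdist E u v \<noteq> \<infinity> \<Longrightarrow> walk E (the_enat (gdist E u v)) u v"
  by (auto simp: gdist_eq_Least_walk split: if_splits intro: LeastI_ex)

lemma gdist_self: "gdist E u u = 0"
  by (auto simp: gdist_eq_Least_walk zero_enat_def intro: exI[of _ 0])

lemma gdist_edge:
  assumes "E u v" "u \<noteq> v"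
  shows "gdist E u v = 1"
proof -
  have "(LEAST n. walk E n u v) = Suc 0"
  proof (rule Least_equality)
    fix n assume "walk E n u v"
    then show "Suc 0 \<le> n" using assms(2) by (cases n) auto
  qed (simp add: assms(1))
  moreover have "\<exists>n. walk E n u v"
    using assms(1) by (intro exI[of _ "Suc 0"]) simp
  ultimately show ?thesis
    by (simp add: gdist_eq_Least_walk one_enat_def)
qed

lemma one_le_gdist: "gdist E u v \<noteq> \<infinity> \<Longrightarrow> u \<noteq> v \<Longrightarrow> 1 \<le> the_enat (gdist E u v)"
  using walk_the_gdist walk_0_iff by (metis less_one not_less)

lemma two_le_gdist:
  "gdist E u v \<noteq> \<infinity> \<Longrightarrow> u \<noteq> v \<Longrightarrow> \<not> E u v \<Longrightarrow> 2 \<le> the_enat (gdist E u v)"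
  using walk_the_gdist walk_0_iff walk_Suc_0_iff
  by (metis less_2_cases not_less)

lemma hall_condition_Diff_tight:
  assumes fin: "finite A" "finite (R `` A)"
    and hall: "\<forall>S\<subseteq>A. card S \<le> card (R `` S)"
    and tight: "S \<subseteq> A" "card (R `` S) \<le> card S"
    and T: "T \<subseteq> A - S"
  shows "card T \<le> card ((R - UNIV \<times> R `` S) `` T)"
proof -
  have "R `` (T \<union> S) \<subseteq> R `` A"
    using tight T by blast
  then have finTS: "finite T" "finite S" "finite (R `` (T \<union> S))"
    using fin tight T by (auto intro: finite_subset)
  have "card T + card S = card (T \<union> S)"
    using finTS T by (subst card_Un_disjoint) auto
  also have "\<dots> \<le> card (R `` (T \<union> S))"
    using hall T tight by (metis Diff_subset Un_subset_iff order_trans)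
  also have "\<dots> = card (R `` (T \<union> S) - R `` S) + card (R `` S)"
  proof -
    have "R `` S \<subseteq> R `` (T \<union> S)"
      by blast
    then show ?thesis
      using finTS(3) by (metis card_Diff_subset card_mono finite_subset le_add_diff_inverse2)
  qed
  finally have "card T \<le> card (R `` (T \<union> S) - R `` S)"
    using tight by linarith
  also have "R `` (T \<union> S) - R `` S = (R - UNIV \<times> R `` S) `` T"
    by blast
  finally show ?thesis .
qed

lemma hall_condition_Diff_edge:
  assumes surplus: "\<forall>S. S \<noteq> {} \<longrightarrow> S \<subset> A \<longrightarrow> card S < card (R `` S)"
    and "a \<in> A" and T: "T \<subseteq> A - {a}"
  shows "card T \<le> card ((R - UNIV \<times> {b}) `` T)"
proof (cases "T = {}")
  case False
  then have "card T < card (R `` T)"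
    using surplus T \<open>a \<in> A\<close> by blast
  also have "\<dots> \<le> Suc (card (R `` T - {b}))"
    by (auto simp: card_Diff_singleton_if)
  also have "R `` T - {b} = (R - UNIV \<times> {b}) `` T"
    by blast
  finally show ?thesis
    by simp
qed simp

lemma marriage_step_tight:
  fixes R :: "('a \<times> 'b) set"
  assumes IH: "\<And>A' (R' :: ('a \<times> 'b) set). card A' < card A \<Longrightarrow> finite A' \<Longrightarrow> finite (R' `` A') \<Longrightarrow>
      \<forall>S\<subseteq>A'. card S \<le> card (R' `` S) \<Longrightarrow> \<exists>f. inj_on f A' \<and> (\<forall>a\<in>A'. (a, f a) \<in> R')"
    and fin: "finite A" "finite (R `` A)" and hall: "\<forall>S\<subseteq>A. card S \<le> card (R `` S)"
    and S: "S \<noteq> {}" "S \<subset> A" "card (R `` S) \<le> card S"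
  shows "\<exists>f. inj_on f A \<and> (\<forall>a\<in>A. (a, f a) \<in> R)"
proof -
  define R' where "R' = R - UNIV \<times> R `` S"
  have "R `` S \<subseteq> R `` A"
    using S by blast
  then have finS: "finite S" "finite (R `` S)"
    using S fin by (auto intro: finite_subset)
  obtain f where f: "inj_on f S" "\<forall>a\<in>S. (a, f a) \<in> R"
    using IH[OF psubset_card_mono[OF fin(1) S(2)] finS] S hall by auto
  have "0 < card S" "card S \<le> card A"
    using S finS fin by (auto simp: card_gt_0_iff intro: card_mono)
  then have "card (A - S) < card A"
    using S finS by (simp add: card_Diff_subset psubset_imp_subset)
  moreover have "finite (R' `` (A - S))"
    using fin by (auto simp: R'_def intro: finite_subset)
  moreover have "\<forall>T\<subseteq>A - S. card T \<le> card (R' `` T)"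
    using hall_condition_Diff_tight[OF fin hall] S by (simp add: R'_def)
  ultimately obtain g where g: "inj_on g (A - S)" "\<forall>a\<in>A - S. (a, g a) \<in> R'"
    using IH[of "A - S" R'] fin by auto
  let ?h = "\<lambda>a. if a \<in> S then f a else g a"
  have "?h ` S \<subseteq> R `` S" "?h ` (A - S) \<inter> R `` S = {}"
    using f g by (auto simp: R'_def)
  then have "inj_on ?h (S \<union> (A - S))"
    using f g by (subst inj_on_Un) (auto simp: inj_on_def)
  moreover have "S \<union> (A - S) = A"
    using S by blast
  ultimately show ?thesis
    using f g by (auto simp: R'_def intro!: exI[of _ ?h])
qed

lemma marriage_step_surplus:
  fixes R :: "('a \<times> 'b) set"
  assumes IH: "\<And>A' (R' :: ('a \<times> 'b) set). card A' < card A \<Longrightarrow> finite A' \<Longrightarrow> finite (R' `` A') \<Longrightarrow>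
      \<forall>S\<subseteq>A'. card S \<le> card (R' `` S) \<Longrightarrow> \<exists>f. inj_on f A' \<and> (\<forall>a\<in>A'. (a, f a) \<in> R')"
    and fin: "finite A" "finite (R `` A)" and hall: "\<forall>S\<subseteq>A. card S \<le> card (R `` S)"
    and surplus: "\<forall>S. S \<noteq> {} \<longrightarrow> S \<subset> A \<longrightarrow> card S < card (R `` S)"
    and a: "a \<in> A"
  shows "\<exists>f. inj_on f A \<and> (\<forall>a\<in>A. (a, f a) \<in> R)"
proof -
  have "card {a} \<le> card (R `` {a})"
    using hall a by blast
  then have "R `` {a} \<noteq> {}"
    by auto
  then obtain b where b: "(a, b) \<in> R"
    by blast
  define R' where "R' = R - UNIV \<times> {b}"
  have "card (A - {a}) < card A"
    using fin(1) a by (rule card_Diff1_less)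
  moreover have "finite (R' `` (A - {a}))"
    using fin by (auto simp: R'_def intro: finite_subset)
  moreover have "\<forall>T\<subseteq>A - {a}. card T \<le> card (R' `` T)"
    using hall_condition_Diff_edge[OF surplus a] unfolding R'_def by blast
  ultimately obtain g where g: "inj_on g (A - {a})" "\<forall>u\<in>A - {a}. (u, g u) \<in> R'"
    using IH[of "A - {a}" R'] fin by auto
  have "inj_on (g(a := b)) (insert a (A - {a}))"
    using g by (auto simp: R'_def inj_on_def)
  then show ?thesis
    using a b g by (auto simp: R'_def insert_absorb intro!: exI[of _ "g(a := b)"])
qed

theorem marriage:
  assumes "finite A" "finite (R `` A)" "\<forall>S\<subseteq>A. card S \<le> card (R `` S)"
  shows "\<exists>f. inj_on f A \<and> (\<forall>a\<in>A. (a, f a) \<in> R)"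
  using assms
proof (induction "card A" arbitrary: A R rule: less_induct)
  case less
  show ?case
  proof (cases "\<exists>S. S \<noteq> {} \<and> S \<subset> A \<and> card (R `` S) \<le> card S")
    case True
    then obtain S where S: "S \<noteq> {}" "S \<subset> A" "card (R `` S) \<le> card S"
      by blast
    show ?thesis
      by (rule marriage_step_tight[where A = A and R = R]) (fact less.hyps less.prems S)+
  next
    case False
    then have surplus: "\<forall>S. S \<noteq> {} \<longrightarrow> S \<subset> A \<longrightarrow> card S < card (R `` S)"
      by (auto simp: not_le)
    show ?thesis
    proof (cases "A = {}")
      case False
      then obtain a where "a \<in> A"
        by blast
      show ?thesis
        by (rule marriage_step_surplus[where A = A and R = R]) (fact less.hyps less.prems surplus \<open>a \<in> A\<close>)+
    qed simp
  qed
qed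

corollary perfect_matching_if_hall:
  assumes "finite A" "finite B" "card A = card B" "R `` A \<subseteq> B"
    and "\<forall>S\<subseteq>A. card S \<le> card (R `` S)"
  shows "\<exists>f. bij_betw f A B \<and> (\<forall>a\<in>A. (a, f a) \<in> R)"
proof -
  obtain f where f: "inj_on f A" "\<forall>a\<in>A. (a, f a) \<in> R"
    using marriage[of A R] assms finite_subset by blast
  then have "f ` A \<subseteq> B"
    using assms(4) by blast
  moreover have "card (f ` A) = card B"
    using f(1) assms(3) by (simp add: card_image)
  ultimately have "f ` A = B"
    using assms(2) by (simp add: card_subset_eq)
  then show ?thesis
    using f by (auto simp: bij_betw_def)
qed

definition plan_mass :: "('a \<Rightarrow> 'b \<Rightarrow> real) \<Rightarrow> 'a set \<Rightarrow> 'b set \<Rightarrow> real" where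
  "plan_mass p A B = (\<Sum>u\<in>A. \<Sum>v\<in>B. p u v)"

lemma plan_mass_Un_left:
  "finite A \<Longrightarrow> finite A' \<Longrightarrow> A \<inter> A' = {} \<Longrightarrow>
    plan_mass p (A \<union> A') B = plan_mass p A B + plan_mass p A' B"
  unfolding plan_mass_def by (rule sum.union_disjoint)

lemma plan_mass_Un_right:
  "finite B \<Longrightarrow> finite B' \<Longrightarrow> B \<inter> B' = {} \<Longrightarrow>
    plan_mass p A (B \<union> B') = plan_mass p A B + plan_mass p A B'"
  unfolding plan_mass_def by (simp add: sum.union_disjoint sum.distrib)

lemma plan_mass_mono:
  assumes "\<And>u v. 0 \<le> p u v" "A \<subseteq> A'" "B \<subseteq> B'" "finite A'" "finite B'"
  shows "plan_mass p A B \<le> plan_mass p A' B'"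
proof -
  have "plan_mass p A B \<le> (\<Sum>u\<in>A. \<Sum>v\<in>B'. p u v)"
    unfolding plan_mass_def using assms
    by (intro sum_mono sum_mono2) (auto intro: finite_subset)
  also have "\<dots> \<le> plan_mass p A' B'"
    unfolding plan_mass_def using assms by (intro sum_mono2) (auto intro: sum_nonneg)
  finally show ?thesis .
qed

lemma plan_mass_rows:
  "(\<And>u. u \<in> A \<Longrightarrow> (\<Sum>v\<in>B. p u v) = m) \<Longrightarrow> plan_mass p A B = m * card A"
  unfolding plan_mass_def by simp

lemma plan_mass_cols:
  "(\<And>v. v \<in> B \<Longrightarrow> (\<Sum>u\<in>A. p u v) = m) \<Longrightarrow> plan_mass p A B = m * card B"
  unfolding plan_mass_def by (subst sum.swap) simp

lemma sum_sum_of_bool_eq_plan_mass: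
  assumes "finite X" "finite Y" "A \<subseteq> X" "B \<subseteq> Y"
  shows "(\<Sum>u\<in>X. \<Sum>v\<in>Y. p u v * of_bool (u \<in> A \<and> v \<in> B)) = plan_mass p A B"
proof -
  have "(\<Sum>u\<in>X. \<Sum>v\<in>Y. p u v * of_bool (u \<in> A \<and> v \<in> B))
      = (\<Sum>u\<in>X. if u \<in> A then \<Sum>v\<in>Y. if v \<in> B then p u v else 0 else 0)"
    by (intro sum.cong refl) (auto intro: sum.cong)
  also have "\<dots> = plan_mass p (X \<inter> A) (Y \<inter> B)"
    using assms by (simp add: plan_mass_def sum.inter_restrict)
  finally show ?thesis
    using assms by (simp add: Int_absorb1)
qed

locale shared_support_plan =
  fixes p :: "'a \<Rightarrow> 'a \<Rightarrow> real" and D X Y :: "'a set" and m :: real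
  assumes finite: "finite D" "finite X" "finite Y"
    and disjoint: "D \<inter> X = {}" "D \<inter> Y = {}"
    and nonneg: "\<And>u v. 0 \<le> p u v"
    and row_sums: "\<And>u. u \<in> D \<union> X \<Longrightarrow> (\<Sum>v\<in>D \<union> Y. p u v) = m"
    and col_sums: "\<And>v. v \<in> D \<union> Y \<Longrightarrow> (\<Sum>u\<in>D \<union> X. p u v) = m"
begin

lemma plan_mass_exchange: "plan_mass p X D = plan_mass p D Y"
proof -
  have "plan_mass p D D + plan_mass p X D = m * card D"
    using finite disjoint col_sums
    by (simp add: plan_mass_cols flip: plan_mass_Un_left)
  moreover have "plan_mass p D D + plan_mass p D Y = m * card D"
    using finite disjoint row_sums
    by (simp add: plan_mass_rows flip: plan_mass_Un_right)
  ultimately show ?thesis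
    by linarith
qed

lemma plan_mass_deficiency:
  assumes "S \<subseteq> X" "T \<subseteq> Y"
  shows "m * (real (card S) - real (card T)) \<le> plan_mass p S (Y - T) + plan_mass p D Y"
proof -
  have finS: "finite S" "finite T"
    using assms finite by (auto intro: finite_subset)
  have "m * card S = plan_mass p S (D \<union> (T \<union> (Y - T)))"
    using assms row_sums by (intro plan_mass_rows[symmetric]) (auto simp: Un_absorb1)
  also have "\<dots> = plan_mass p S D + plan_mass p S (T \<union> (Y - T))"
    using finite finS disjoint assms by (intro plan_mass_Un_right) auto
  also have "plan_mass p S (T \<union> (Y - T)) = plan_mass p S T + plan_mass p S (Y - T)"
    using finite finS by (intro plan_mass_Un_right) auto
  finally have "m * card S = plan_mass p S D + (plan_mass p S T + plan_mass p S (Y - T))" .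
  moreover have "plan_mass p S T \<le> m * card T"
  proof -
    have "plan_mass p S T \<le> plan_mass p (D \<union> X) T"
      using assms finite finS by (intro plan_mass_mono nonneg) auto
    also have "\<dots> = m * card T"
      using assms col_sums by (intro plan_mass_cols) auto
    finally show ?thesis .
  qed
  moreover have "plan_mass p S D \<le> plan_mass p D Y"
    using assms finite by (auto simp: nonneg plan_mass_mono simp flip: plan_mass_exchange)
  ultimately show ?thesis
    by (simp add: algebra_simps)
qed

lemma transport_cost_lower_bound:
  fixes c :: "'a \<Rightarrow> 'a \<Rightarrow> real"
  assumes ST: "S \<subseteq> X" "T \<subseteq> Y"
    and cost_nonneg: "\<And>u v. u \<in> D \<union> X \<Longrightarrow> v \<in> D \<union> Y \<Longrightarrow> p u v \<noteq> 0 \<Longrightarrow> 0 \<le> c u v"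
    and cost_X: "\<And>u v. u \<in> X \<Longrightarrow> v \<in> D \<union> Y \<Longrightarrow> p u v \<noteq> 0 \<Longrightarrow> 1 \<le> c u v"
    and cost_S: "\<And>u v. u \<in> S \<Longrightarrow> v \<in> Y - T \<Longrightarrow> p u v \<noteq> 0 \<Longrightarrow> 2 \<le> c u v"
    and cost_D: "\<And>u v. u \<in> D \<Longrightarrow> v \<in> Y \<Longrightarrow> p u v \<noteq> 0 \<Longrightarrow> 1 \<le> c u v"
  shows "m * (real (card X) + real (card S) - real (card T))
    \<le> (\<Sum>u\<in>D \<union> X. \<Sum>v\<in>D \<union> Y. p u v * c u v)"
proof -
  \<comment> \<open>\<open>L\<close> is a pointwise lower bound for \<open>c\<close> whose integral against \<open>p\<close> is a sum of block masses.\<close>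
  define L where "L u v = of_bool (u \<in> X \<and> v \<in> D \<union> Y) + of_bool (u \<in> S \<and> v \<in> Y - T)
    + (of_bool (u \<in> D \<and> v \<in> Y) :: real)" for u v
  have fin: "finite (D \<union> X)" "finite (D \<union> Y)"
    using finite by auto
  have "m * (real (card X) + real (card S) - real (card T))
      \<le> plan_mass p X (D \<union> Y) + plan_mass p S (Y - T) + plan_mass p D Y"
    using plan_mass_deficiency[OF ST] row_sums by (simp add: plan_mass_rows algebra_simps)
  also have "\<dots> = (\<Sum>u\<in>D \<union> X. \<Sum>v\<in>D \<union> Y. p u v * L u v)"
    unfolding L_def distrib_left sum.distrib
    using fin ST by (subst (1 2 3) sum_sum_of_bool_eq_plan_mass) auto
  also have "\<dots> \<le> (\<Sum>u\<in>D \<union> X. \<Sum>v\<in>D \<union> Y. p u v * c u v)"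
  proof (intro sum_mono)
    fix u v assume uv: "u \<in> D \<union> X" "v \<in> D \<union> Y"
    have "L u v \<le> c u v" if nonzero: "p u v \<noteq> 0"
    proof (cases "u \<in> X")
      case True
      then have "u \<notin> D"
        using disjoint by blast
      then show ?thesis
        using True uv nonzero cost_X[of u v] cost_S[of u v] by (auto simp: L_def)
    next
      case False
      then have "u \<in> D" "u \<notin> S"
        using uv ST by auto
      then show ?thesis
        using False uv nonzero cost_nonneg[of u v] cost_D[of u v] by (auto simp: L_def)
    qed
    then show "p u v * L u v \<le> p u v * c u v"
      using nonneg[of u v] by (cases "p u v = 0") (auto intro: mult_left_mono)
  qed
  finally show ?thesis .
qed

end

definition plan_cost :: "('a \<Rightarrow> 'a \<Rightarrow> bool) \<Rightarrow> 'a set \<Rightarrow> 'a set \<Rightarrow> ('a \<Rightarrow> 'a \<Rightarrow> real) \<Rightarrow> real" where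
  "plan_cost E A B \<pi> = (\<Sum>(u, v)\<in>A \<times> B. \<pi> u v * real (the_enat (gdist E u v)))"

definition finite_cost_plans ::
    "('a \<Rightarrow> 'a \<Rightarrow> bool) \<Rightarrow> 'a set \<Rightarrow> ('a \<Rightarrow> real) \<Rightarrow> 'a set \<Rightarrow> ('a \<Rightarrow> real) \<Rightarrow> ('a \<Rightarrow> 'a \<Rightarrow> real) set" where
  "finite_cost_plans E A mu B nu = {\<pi> \<in> couplings A mu B nu. \<forall>u v. \<pi> u v \<noteq> 0 \<longrightarrow> gdist E u v \<noteq> \<infinity>}"

lemma W1_eq_Inf_plan_cost: "W1 E A mu B nu = Inf (plan_cost E A B ` finite_cost_plans E A mu B nu)"
  unfolding W1_def plan_cost_def finite_cost_plans_def by (intro arg_cong[where f = Inf]) blast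

locale equal_degree_edge =
  fixes E :: "'a \<Rightarrow> 'a \<Rightarrow> bool" and x y :: 'a and d :: nat
  assumes sym: "\<forall>u v. E u v \<longrightarrow> E v u" and irrefl: "\<forall>u. \<not> E u u"
    and locfin: "\<forall>u. finite (nbrs E u)" and edge: "E x y"
    and deg_x: "deg E x = d" and deg_y: "deg E y = d"
begin

abbreviation "Nx \<equiv> nbrs E x"
abbreviation "Ny \<equiv> nbrs E y"
abbreviation "Dl \<equiv> Delta E x y"
abbreviation "Qx \<equiv> Qset E x y"
abbreviation "Qy \<equiv> Qset E y x"
abbreviation "plans \<equiv> finite_cost_plans E Nx (unif_nbr E x) Ny (unif_nbr E y)"
abbreviation "cost \<equiv> plan_cost E Nx Ny"

lemma nbrs_x_eq: "Nx = Dl \<union> Qx" and nbrs_y_eq: "Ny = Dl \<union> Qy"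
  and Delta_disjoint: "Dl \<inter> Qx = {}" "Dl \<inter> Qy = {}"
  and Qset_disjoint_nbrs: "Qx \<inter> Ny = {}"
  by (auto simp: Qset_def Delta_def)

lemma finite_nbrs: "finite Nx" "finite Ny" "finite Dl" "finite Qx" "finite Qy"
  using locfin by (auto simp: Qset_def Delta_def)

lemma card_Delta_Qset: "card Dl + card Qx = d" "card Dl + card Qy = d"
  using deg_x deg_y finite_nbrs Delta_disjoint
  by (simp_all add: deg_def nbrs_x_eq nbrs_y_eq card_Un_disjoint)

lemma deg_pos: "0 < d"
proof -
  have "y \<in> Nx"
    using edge by (simp add: nbrs_def)
  then show ?thesis
    using deg_x finite_nbrs by (auto simp: deg_def card_gt_0_iff)
qed

lemma unif_nbr_x: "unif_nbr E x u = (if u \<in> Nx then 1 / d else 0)"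
  and unif_nbr_y: "unif_nbr E y u = (if u \<in> Ny then 1 / d else 0)"
  by (simp_all add: unif_nbr_def deg_x deg_y)

lemma product_plan_mem_plans: "(\<lambda>u v. unif_nbr E x u * unif_nbr E y v) \<in> plans"
proof -
  have "gdist E u v \<noteq> \<infinity>" if "u \<in> Nx" "v \<in> Ny" for u v
  proof -
    have "walk E (Suc 0) u x"
      using that sym by (simp add: nbrs_def)
    then have "walk E (Suc (Suc 0)) u y"
      using edge by (rule walk_snoc)
    then have "walk E (Suc (Suc (Suc 0))) u v"
      using that(2) by (simp add: nbrs_def walk_snoc)
    then show ?thesis
      by (rule gdist_finite_if_walk)
  qed
  moreover have "(\<Sum>u\<in>Nx. unif_nbr E x u) = 1" "(\<Sum>v\<in>Ny. unif_nbr E y v) = 1"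
    using deg_x deg_y deg_pos by (simp_all add: unif_nbr_x unif_nbr_y deg_def)
  ultimately show ?thesis
    unfolding finite_cost_plans_def couplings_def
    by (simp add: unif_nbr_x unif_nbr_y flip: sum_distrib_left sum_distrib_right)
qed

lemma plan_cost_lower_bound:
  assumes \<pi>: "\<pi> \<in> plans" and S: "S \<subseteq> Qx"
  shows "(real (card Qx) + real (card S) - real (card {b \<in> Qy. \<exists>a\<in>S. E a b})) / d \<le> cost \<pi>"
proof -
  define T where "T = {b \<in> Qy. \<exists>a\<in>S. E a b}"
  have coupling: "\<pi> \<in> couplings Nx (unif_nbr E x) Ny (unif_nbr E y)"
    and finite_dist: "\<And>u v. \<pi> u v \<noteq> 0 \<Longrightarrow> gdist E u v \<noteq> \<infinity>"
    using \<pi> by (auto simp: finite_cost_plans_def)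
  interpret shared_support_plan \<pi> Dl Qx Qy "1 / d"
  proof
    show "\<And>u v. 0 \<le> \<pi> u v"
      using coupling by (simp add: couplings_def)
    show "(\<Sum>v\<in>Dl \<union> Qy. \<pi> u v) = 1 / d" if "u \<in> Dl \<union> Qx" for u
      using coupling that by (simp add: couplings_def unif_nbr_x flip: nbrs_x_eq nbrs_y_eq)
    show "(\<Sum>u\<in>Dl \<union> Qx. \<pi> u v) = 1 / d" if "v \<in> Dl \<union> Qy" for v
      using coupling that by (simp add: couplings_def unif_nbr_y flip: nbrs_x_eq nbrs_y_eq)
  qed (use finite_nbrs Delta_disjoint in auto)
  let ?c = "\<lambda>u v. real (the_enat (gdist E u v))"
  have "1 / d * (real (card Qx) + real (card S) - real (card T))
      \<le> (\<Sum>u\<in>Dl \<union> Qx. \<Sum>v\<in>Dl \<union> Qy. \<pi> u v * ?c u v)"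
  proof (rule transport_cost_lower_bound[OF S])
    show "T \<subseteq> Qy"
      by (auto simp: T_def)
    fix u v assume "\<pi> u v \<noteq> 0"
    then have fin: "gdist E u v \<noteq> \<infinity>"
      by (rule finite_dist)
    show "1 \<le> ?c u v" if "u \<in> Qx" "v \<in> Dl \<union> Qy"
      using that fin Qset_disjoint_nbrs one_le_gdist[of E u v] by (auto simp: nbrs_y_eq)
    show "2 \<le> ?c u v" if "u \<in> S" "v \<in> Qy - T"
      using that fin S two_le_gdist[of E u v] Qset_disjoint_nbrs by (auto simp: T_def nbrs_y_eq)
    show "1 \<le> ?c u v" if "u \<in> Dl" "v \<in> Qy"
      using that fin Delta_disjoint one_le_gdist[of E u v] by auto
  qed simp
  also have "\<dots> = cost \<pi>"
    by (simp add: plan_cost_def sum.cartesian_product nbrs_x_eq nbrs_y_eq)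
  finally show ?thesis
    by (simp add: T_def)
qed

lemma card_Qset_div_deg_le_cost: "\<pi> \<in> plans \<Longrightarrow> card Qx / d \<le> cost \<pi>"
  using plan_cost_lower_bound[of \<pi> "{}"] by simp

lemma card_Qset_eq: "card Qx = card Qy"
  using card_Delta_Qset by simp

lemma hall_violation_if_no_perfect_matching:
  assumes "\<nexists>\<sigma>. bij_betw \<sigma> Qx Qy \<and> (\<forall>a\<in>Qx. E a (\<sigma> a))"
  obtains S where "S \<subseteq> Qx" "card {b \<in> Qy. \<exists>a\<in>S. E a b} < card S"
proof -
  define R where "R = {(a, b). E a b \<and> b \<in> Qy}"
  have R_Image: "R `` S = {b \<in> Qy. \<exists>a\<in>S. E a b}" for S
    by (auto simp: R_def)
  have "\<not> (\<forall>S\<subseteq>Qx. card S \<le> card (R `` S))"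
  proof
    assume hall: "\<forall>S\<subseteq>Qx. card S \<le> card (R `` S)"
    have "R `` Qx \<subseteq> Qy"
      by (auto simp: R_def)
    then obtain f where "bij_betw f Qx Qy" "\<forall>a\<in>Qx. (a, f a) \<in> R"
      using perfect_matching_if_hall[OF finite_nbrs(4,5) card_Qset_eq _ hall] by blast
    then show False
      using assms by (auto simp: R_def)
  qed
  then show ?thesis
    using that by (auto simp: R_Image not_le)
qed

lemma W1_ge_if_hall_violation:
  assumes S: "S \<subseteq> Qx" "card {b \<in> Qy. \<exists>a\<in>S. E a b} < card S"
  shows "(card Qx + 1) / d \<le> W1 E Nx (unif_nbr E x) Ny (unif_nbr E y)"
  unfolding W1_eq_Inf_plan_cost
proof (rule cInf_greatest)
  show "cost ` plans \<noteq> {}"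
    using product_plan_mem_plans by blast
  fix c assume "c \<in> cost ` plans"
  then obtain \<pi> where \<pi>: "\<pi> \<in> plans" "c = cost \<pi>"
    by blast
  have "real (card Qx) + 1 \<le> real (card Qx) + card S - card {b \<in> Qy. \<exists>a\<in>S. E a b}"
    using S(2) by linarith
  then have "(card Qx + 1) / d \<le> (real (card Qx) + card S - card {b \<in> Qy. \<exists>a\<in>S. E a b}) / d"
    by (simp add: divide_right_mono)
  also have "\<dots> \<le> c"
    unfolding \<pi>(2) using \<pi>(1) S(1) by (rule plan_cost_lower_bound)
  finally show "(card Qx + 1) / d \<le> c" .
qed

lemma matching_extends_to_bij_nbrs:
  assumes "bij_betw \<sigma> Qx Qy"
  shows "bij_betw (\<lambda>u. if u \<in> Dl then u else \<sigma> u) Nx Ny"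
proof -
  have "bij_betw (\<lambda>u. if u \<in> Dl then u else \<sigma> u) Dl Dl"
    by (rule bij_betw_cong[THEN iffD1, OF _ bij_betw_id]) simp
  moreover have "bij_betw (\<lambda>u. if u \<in> Dl then u else \<sigma> u) Qx Qy"
    using assms Delta_disjoint by (intro bij_betw_cong[THEN iffD1, OF _ assms]) auto
  ultimately show ?thesis
    unfolding nbrs_x_eq nbrs_y_eq using Delta_disjoint by (intro bij_betw_combine)
qed

definition bij_plan :: "('a \<Rightarrow> 'a) \<Rightarrow> 'a \<Rightarrow> 'a \<Rightarrow> real" where
  "bij_plan \<tau> u v = (if u \<in> Nx \<and> v = \<tau> u then 1 / d else 0)"

lemma bij_plan_mem_plans:
  assumes \<tau>: "bij_betw \<tau> Nx Ny" and finite_dist: "\<forall>u\<in>Nx. gdist E u (\<tau> u) \<noteq> \<infinity>"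
  shows "bij_plan \<tau> \<in> plans"
proof -
  have rows: "(\<Sum>v\<in>Ny. bij_plan \<tau> u v) = unif_nbr E x u" for u
    using \<tau> finite_nbrs by (auto simp: bij_plan_def unif_nbr_x bij_betwE)
  have cols: "(\<Sum>u\<in>Nx. bij_plan \<tau> u v) = unif_nbr E y v" for v
  proof -
    have "(\<Sum>u\<in>Nx. bij_plan \<tau> u v) = (\<Sum>u\<in>Nx. (\<lambda>w. if v = w then 1 / d else 0) (\<tau> u))"
      by (intro sum.cong) (auto simp: bij_plan_def)
    also have "\<dots> = (\<Sum>w\<in>Ny. if v = w then 1 / d else 0)"
      using \<tau> by (rule sum.reindex_bij_betw)
    finally show ?thesis
      using finite_nbrs by (simp add: unif_nbr_y)
  qed
  show ?thesis
    unfolding finite_cost_plans_def couplings_def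
    using rows cols \<tau> finite_dist by (auto simp: bij_plan_def bij_betwE)
qed

lemma cost_bij_plan:
  assumes \<tau>: "bij_betw \<tau> Nx Ny"
  shows "cost (bij_plan \<tau>) = (\<Sum>u\<in>Nx. real (the_enat (gdist E u (\<tau> u)))) / d"
proof -
  have "(\<Sum>v\<in>Ny. bij_plan \<tau> u v * real (the_enat (gdist E u v)))
      = real (the_enat (gdist E u (\<tau> u))) / d" if u: "u \<in> Nx" for u
  proof -
    have "(\<Sum>v\<in>Ny. bij_plan \<tau> u v * real (the_enat (gdist E u v)))
        = (\<Sum>v\<in>Ny. if v = \<tau> u then real (the_enat (gdist E u (\<tau> u))) / d else 0)"
      using u by (intro sum.cong) (auto simp: bij_plan_def)
    then show ?thesis
      using u \<tau> finite_nbrs by (simp add: bij_betwE)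
  qed
  then show ?thesis
    unfolding plan_cost_def sum_divide_distrib sum.cartesian_product[symmetric] by (rule sum.cong[OF refl]) simp
qed

lemma W1_eq_if_perfect_matching:
  assumes \<sigma>: "bij_betw \<sigma> Qx Qy" "\<forall>a\<in>Qx. E a (\<sigma> a)"
  shows "W1 E Nx (unif_nbr E x) Ny (unif_nbr E y) = card Qx / d"
proof -
  define \<tau> where "\<tau> u = (if u \<in> Dl then u else \<sigma> u)" for u
  have \<tau>: "bij_betw \<tau> Nx Ny"
    unfolding \<tau>_def using \<sigma>(1) by (rule matching_extends_to_bij_nbrs)
  have "gdist E a (\<sigma> a) = 1" if "a \<in> Qx" for a
    using that \<sigma>(2) irrefl by (metis gdist_edge)
  then have gdist_\<tau>: "gdist E u (\<tau> u) = (if u \<in> Qx then 1 else 0)" if "u \<in> Nx" for u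
    using that Delta_disjoint by (auto simp: \<tau>_def nbrs_x_eq gdist_self)
  have "(\<Sum>u\<in>Nx. real (the_enat (gdist E u (\<tau> u)))) = (\<Sum>u\<in>Nx. if u \<in> Qx then 1 else 0)"
    using gdist_\<tau> by (intro sum.cong) (auto simp: zero_enat_def one_enat_def)
  also have "\<dots> = card Qx"
    using finite_nbrs by (simp add: sum.If_cases nbrs_x_eq Int_absorb1)
  finally have "cost (bij_plan \<tau>) = card Qx / d"
    by (simp add: cost_bij_plan[OF \<tau>])
  moreover have "bij_plan \<tau> \<in> plans"
    using \<tau> gdist_\<tau> by (intro bij_plan_mem_plans) (auto simp: zero_enat_def one_enat_def)
  ultimately have "card Qx / d \<in> cost ` plans"
    by (metis image_eqI)
  then show ?thesis
    unfolding W1_eq_Inf_plan_cost by (rule cInf_eq_minimum) (auto intro: card_Qset_div_deg_le_cost)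
qed

lemma W1_eq_card_Qset_iff_perfect_matching:
  "W1 E Nx (unif_nbr E x) Ny (unif_nbr E y) = card Qx / d
    \<longleftrightarrow> (\<exists>\<sigma>. bij_betw \<sigma> Qx Qy \<and> (\<forall>a\<in>Qx. E a (\<sigma> a)))"
proof
  assume W: "W1 E Nx (unif_nbr E x) Ny (unif_nbr E y) = card Qx / d"
  have "card Qx / d < (card Qx + 1) / d"
    using deg_pos by (simp add: divide_strict_right_mono)
  then show "\<exists>\<sigma>. bij_betw \<sigma> Qx Qy \<and> (\<forall>a\<in>Qx. E a (\<sigma> a))"
    using hall_violation_if_no_perfect_matching W1_ge_if_hall_violation W by fastforce
qed (use W1_eq_if_perfect_matching in blast)

end

theorem theorem4p2:
  fixes E :: "'a \<Rightarrow> 'a \<Rightarrow> bool" and x y :: 'a and d :: nat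
  assumes sym: "\<forall>u v. E u v \<longrightarrow> E v u"
    and irrefl: "\<forall>u. \<not> E u u"
    and locfin: "\<forall>u. finite (nbrs E u)"
    and edge: "E x y"
    and dx: "deg E x = d" and dy: "deg E y = d"
  shows "kappa E x y = real (card (Delta E x y)) / real d \<longleftrightarrow>
    (\<exists>\<sigma>. bij_betw \<sigma> (Qset E x y) (Qset E y x) \<and> (\<forall>a\<in>Qset E x y. E a (\<sigma> a)))"
proof -
  interpret equal_degree_edge E x y d
    using assms by unfold_locales
  have "real (card (Delta E x y)) / d = 1 - card (Qset E x y) / d"
    using card_Delta_Qset(1) deg_pos by (simp add: field_simps flip: of_nat_add)
  then show ?thesis
    unfolding kappa_def W1_eq_card_Qset_iff_perfect_matching[symmetric] by linarith
qed

end
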